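(* Consider the misspecified Nash–Cournot game and Algorithm II described in the context, and suppose (A5), (A6), (A7) and (A8) of the context hold. Let $\{x_i^k,\hat\theta_i^k\}$, $i=1,\dots,N$, be computed by Algorithm II. Then for every $i=1,\dots,N$, $\hat\theta_i^k\to\theta^*$ almost surely and $x_i^k\to x^*$ almost surely as $k\to\infty$, where $x^*=(x_1^*,\dots,x_N^* )$ is the solution of the variational inequality: $x^*\in K=\prod_jK_j$ and $(y-x^* )^TF(x^* )\ge0$ for all $y\in K$, with $F_j(x)=c_j'(x_j)-a^*+b^*\sum_{l=1}^Nx_l+b^*x_j$.
   Context: Game: $N$ firms; firm $j$ chooses output $x_j\in K_j\subseteq[0,\infty)$ and minimizes $f_j(x;\theta)=c_j(x_j)-p(X)x_j$, where $X=\sum_{l}x_l$ and the true price is $p(X)=a^*-b^*X$ with $a^*,b^*>0$. For a vector $z=(z_1,\dots,z_N)$ of outputs, $Z=\sum_lz_l$ and a parameter value $\theta$, write $\nabla_{z_j}f_j(z;\theta)$ for the derivative of $c_j(z_j)-\hat p(Z;\theta)z_j$ in $z_j$, where $\hat p(Z;\theta)=\theta-b^*Z$ in case (A5a) and $\hat p(Z;\theta)=a^*-\theta Z$ in case (A5b). (A5) Exactly one of: (A5a) firms know $b^*$ but not $a^*$; the unknown parameter is $\theta^*=a^*$, and the price observed at output $X$ is $(a^*+\xi)-b^*X$; or (A5b) firms know $a^*$ but not $b^*$; $\theta^*=b^*$, and the observed price is $a^*-(b^*+\xi)X$. Here $\xi^1,\xi^2,\dots$ are i.i.d. real random variables with mean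 zero. (A6) (Common knowledge) All cost functions $c_j$ and sets $K_j$ are common knowledge; aggregate output is unobservable. (A7) Each $c_j$ is convex and continuously differentiable with $c_j'$ Lipschitz on $K_j$; $\Theta$ is closed, convex, bounded; each $K_j$ is nonempty, closed, convex, bounded. (A8) $\Theta=[\delta,\Delta]$ with $0<\delta<\theta^*+\xi^k<\Delta$ for all $k$; the $K_j$ are bounded. Also, at least one $K_j$ requires strictly positive output, so that estimated aggregates below are strictly positive. Algorithm II: given a positive sequence $\epsilon^k\downarrow0$ and constants $\gamma_x,\gamma_\theta>0$. Firm $j$'s actual initial output is $x_{jj}^0$, $X^0=\sum_jx_{jj}^0$, $p^0=a^*-b^*X^0$, and $\bar\vartheta_i^0=0$ for all $i$. At step $k\ge0$, each firm $i$ computes $x_i^{k+1}=(x_{i1}^{k+1},\dots,x_{iN}^{k+1})$ (its estimate of all firms' outputs) and $\theta_i^{k+1}$ as a solution of $x_{ij}^{k+1}=\Pi_{K_j}\big(x_{ij}^{k+1}-\gamma_x(\nabla_{x_{ij}}f_j(x_i^{k+1};\hat\theta_i^{k+1})+\epsilon^kx_{ij}^{k+1})\big)$, $j=1,\dots,N$, $\theta_i^{k+1}=\Pi_\Theta\big(\theta_i^{k+1}-\gamma_\theta(\tilde p_i^k+\epsilon^k\theta_i^{k+1})\big)$, where $\hat\theta_i^{k+1}=\frac{1}{k+1}\theta_i^{k+1}+\frac{k}{k+1}\bar\vartheta_i^k$, $X_i^{k+1}=\sum_jx_{ij}^{k+1}$, and $\tilde p_i^k=\hat p(X_i^{k+1};\hat\theta_i^{k+1})-p^k$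 in case (A5a), $\tilde p_i^k=p^k-\hat p(X_i^{k+1};\hat\theta_i^{k+1})$ in case (A5b). Firm $j$ actually produces $x_{jj}^{k+1}$; for $k\ge1$, $X^k=\sum_jx_{jj}^k$ and $p^k$ is the observed (noisy) price at $X^k$ with noise $\xi^k$. Each firm forms $\vartheta_i^k=p^k+b^*X_i^k$ in case (A5a) and $\vartheta_i^k=(a^*-p^k)/X_i^k$ in case (A5b), and updates $\bar\vartheta_i^k=((k-1)\bar\vartheta_i^{k-1}+\vartheta_i^k)/k$. $\Pi_C$ is Euclidean projection onto $C$. *)

theory Defs
  imports "HOL-Probability.Probability"
begin

text \<open>Estimated price  hat p(Z;theta): case (A5a) is encoded by caseA = True
  (unknown intercept, theta - b* Z), case (A5b) by caseA = False
  (unknown slope, a* - theta Z).\<close>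
definition phat :: "bool \<Rightarrow> real \<Rightarrow> real \<Rightarrow> real \<Rightarrow> real \<Rightarrow> real" where
  "phat caseA astar bstar \<theta> Z = (if caseA then \<theta> - bstar * Z else astar - \<theta> * Z)"

text \<open>Partial derivative in z_j of  c_j(z_j) - hat p(Z;theta) z_j, Z = sum_{l<N} z_l,
  with c' j the derivative of c j.\<close>
definition gradf :: "bool \<Rightarrow> real \<Rightarrow> real \<Rightarrow> (nat \<Rightarrow> real \<Rightarrow> real) \<Rightarrow> nat \<Rightarrow> nat
    \<Rightarrow> (nat \<Rightarrow> real) \<Rightarrow> real \<Rightarrow> real" where
  "gradf caseA astar bstar c' N j z \<theta> =
     c' j (z j) - phat caseA astar bstar \<theta> (\<Sum>l<N. z l)
     + (if caseA then bstar else \<theta>) * z j"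

definition Fvi :: "real \<Rightarrow> real \<Rightarrow> (nat \<Rightarrow> real \<Rightarrow> real) \<Rightarrow> nat \<Rightarrow> nat \<Rightarrow> (nat \<Rightarrow> real) \<Rightarrow> real" where
  "Fvi astar bstar c' N j z = c' j (z j) - astar + bstar * (\<Sum>l<N. z l) + bstar * z j"

end

theory Submission
  imports Defs
begin

text \<open>
  All firms solve the same regularised fixed-point system from common data, and this system has
  a unique solution as long as the firms' running averages \<open>vtbar\<close> agree. By induction the
  firms therefore always compute identical estimates, so the realised aggregate output equals
  every firm's estimated aggregate and the parameter inferred from the observed price is exactly
  \<open>\<theta>\<^sup>* + \<xi>\<^sup>k\<close>. Hence \<open>vtbar\<close> is the sample mean of bounded i.i.d. noise around \<open>\<theta>\<^sup>*\<close>
  and converges almost surely (Hoeffding and Borel--Cantelli), and so does \<open>\<theta>hat\<close>. Finally the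
  estimates solve a variational inequality whose operator differs from \<open>F\<close> by
  \<open>O(|\<theta>hat - \<theta>\<^sup>*| + \<epsilon>\<^sup>k)\<close> on the bounded set \<open>K\<close>; since \<open>F\<close> is strongly monotone
  (\<open>b\<^sup>* > 0\<close>), they converge to the solution \<open>x\<^sup>*\<close>.
\<close>

lemma convex_on_derivative_le_slope:
  fixes f :: "real \<Rightarrow> real"
  assumes f: "convex_on S f" and u: "u \<in> S" and v: "v \<in> S" and uv: "u < v"
    and du: "(f has_real_derivative f'u) (at u)" and dv: "(f has_real_derivative f'v) (at v)"
  shows "f'u \<le> (f v - f u) / (v - u)" and "(f v - f u) / (v - u) \<le> f'v"
proof -
  have Icc: "convex_on {u..v} f"
    using f atMostAtLeast_subset_convex[OF convex_on_imp_convex[OF f] u v uv]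
    by (rule convex_on_subset) simp
  have between: "eventually (\<lambda>y. y \<in> {u<..<v}) (at u within {u<..})"
    "eventually (\<lambda>y. y \<in> {u<..<v}) (at v within {..<v})"
    using uv by (auto simp: eventually_at_right_field eventually_at_left_field)
  show "f'u \<le> (f v - f u) / (v - u)"
  proof (rule tendsto_upperbound)
    show "((\<lambda>y. (f y - f u) / (y - u)) \<longlongrightarrow> f'u) (at u within {u<..})"
      using has_field_derivative_at_within[OF du] has_field_derivative_iff by blast
    show "eventually (\<lambda>y. (f y - f u) / (y - u) \<le> (f v - f u) / (v - u)) (at u within {u<..})"
      using between(1)
    proof eventually_elim
      case (elim y)
      then have "f y - f u \<le> (f v - f u) / (v - u) * (y - u)"
        using convex_onD_Icc'[OF Icc, of y] by simp
      then show ?case using elim by (simp add: divide_le_eq)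
    qed
  qed simp
  show "(f v - f u) / (v - u) \<le> f'v"
  proof (rule tendsto_lowerbound)
    show "((\<lambda>y. (f y - f v) / (y - v)) \<longlongrightarrow> f'v) (at v within {..<v})"
      using has_field_derivative_at_within[OF dv] has_field_derivative_iff by blast
    show "eventually (\<lambda>y. (f v - f u) / (v - u) \<le> (f y - f v) / (y - v)) (at v within {..<v})"
      using between(2)
    proof eventually_elim
      case (elim y)
      then have "f y - f v \<le> (f u - f v) / (v - u) * (v - y)"
        using convex_onD_Icc''[OF Icc, of y] by simp
      also have "\<dots> = (f v - f u) / (v - u) * (y - v)" by (simp add: algebra_simps)
      finally show ?case using elim by (simp add: neg_le_divide_eq)
    qed
  qed simp
qed

lemma convex_on_derivative_monotone:
  fixes f :: "real \<Rightarrow> real"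
  assumes f: "convex_on S f" and u: "u \<in> S" and v: "v \<in> S"
    and du: "(f has_real_derivative f'u) (at u)" and dv: "(f has_real_derivative f'v) (at v)"
  shows "0 \<le> (f'v - f'u) * (v - u)"
proof (cases u v rule: linorder_cases)
  case less
  then show ?thesis
    using convex_on_derivative_le_slope[OF f u v less du dv] by (simp add: mult_nonneg_nonneg)
next
  case greater
  then show ?thesis
    using convex_on_derivative_le_slope[OF f v u greater dv du] by (simp add: mult_nonpos_nonpos)
qed simp

lemma closest_point_fixpoint_imp_variational_inequality:
  fixes S :: "'a::euclidean_space set"
  assumes S: "closed S" "convex S" "S \<noteq> {}" and \<gamma>: "0 < \<gamma>"
    and fp: "x = closest_point S (x - \<gamma> *\<^sub>R g)"
  shows "x \<in> S" and "\<forall>z\<in>S. 0 \<le> inner (z - x) g"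
proof -
  show x: "x \<in> S" using closest_point_in_set[OF S(1,3)] fp by metis
  show "\<forall>z\<in>S. 0 \<le> inner (z - x) g"
  proof
    fix z assume "z \<in> S"
    then have "inner ((x - \<gamma> *\<^sub>R g) - x) (z - x) \<le> 0"
      using closest_point_dot[OF S(2,1)] fp by metis
    then have "0 \<le> \<gamma> * inner (z - x) g" by (simp add: inner_commute)
    then show "0 \<le> inner (z - x) g" using \<gamma> by (simp add: zero_le_mult_iff)
  qed
qed

lemma (in prob_space) bounded_iid_large_deviations_summable:
  fixes X :: "nat \<Rightarrow> 'a \<Rightarrow> real"
  assumes meas: "\<And>k. 1 \<le> k \<Longrightarrow> X k \<in> borel_measurable M"
    and indep: "indep_vars (\<lambda>_. borel) X {1..}"
    and ident: "\<And>k. 1 \<le> k \<Longrightarrow> distr M borel (X k) = distr M borel (X 1)"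
    and bounded: "\<And>k \<omega>. 1 \<le> k \<Longrightarrow> \<omega> \<in> space M \<Longrightarrow> X k \<omega> \<in> {lo..hi}"
    and mean: "expectation (X 1) = 0"
    and e: "0 < e"
  shows "summable (\<lambda>n. prob {\<omega>\<in>space M. e \<le> \<bar>(\<Sum>k\<in>{1..n}. X k \<omega>) / real n\<bar>})"
proof -
  \<comment> \<open>Hoeffding's inequality needs a nondegenerate interval.\<close>
  define hi' where "hi' = max hi (lo + 1)"
  have lo_hi': "lo < hi'" by (simp add: hi'_def)
  have Hoeffding: "Hoeffding_ineq_iid M {1..n} X (X 1) lo hi'" for n
  proof unfold_locales
    show "finite {1..n}" by simp
    show "indep_vars (\<lambda>_. borel) X {1..n}"
      by (rule indep_vars_subset[OF indep]) auto
    show "distr M borel (X i) = distr M borel (X 1)" if "i \<in> {1..n}" for i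
      using that by (intro ident) simp
    show "random_variable borel (X 1)" using meas by simp
    show "AE \<omega> in M. X 1 \<omega> \<in> {lo..hi'}"
      using bounded[of 1] by (intro AE_I2) (fastforce simp: hi'_def)
  qed
  define r where "r = exp (- 2 * e\<^sup>2 / (hi' - lo)\<^sup>2)"
  have bound: "prob {\<omega>\<in>space M. e \<le> \<bar>(\<Sum>k\<in>{1..n}. X k \<omega>) / real n\<bar>} \<le> 2 * r ^ n" for n
  proof (cases "n = 0")
    case True
    have "prob {\<omega>\<in>space M. e \<le> \<bar>(\<Sum>k\<in>{1..n}. X k \<omega>) / real n\<bar>} \<le> 1" by (rule prob_le_1)
    then show ?thesis using True by (simp only: power_0)
  next
    case False
    have "prob {\<omega>\<in>space M. e \<le> \<bar>(\<Sum>k\<in>{1..n}. X k \<omega>) / real n\<bar>}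
        \<le> 2 * exp (-2 * real n * e\<^sup>2 / (hi' - lo)\<^sup>2)"
      using Hoeffding_ineq_iid.Hoeffding_ineq_abs_ge'[OF Hoeffding, of e n, unfolded mean] False lo_hi' e
      by simp
    also have "exp (-2 * real n * e\<^sup>2 / (hi' - lo)\<^sup>2) = r ^ n"
      unfolding r_def exp_of_nat_mult[symmetric] by (simp add: field_simps)
    finally show ?thesis .
  qed
  show ?thesis
  proof (rule summable_comparison_test')
    show "summable (\<lambda>n. 2 * r ^ n)"
      using lo_hi' e by (intro summable_mult summable_geometric) (simp add: r_def)
  qed (use bound in simp)
qed

lemma (in prob_space) bounded_iid_average_tendsto_zero:
  fixes X :: "nat \<Rightarrow> 'a \<Rightarrow> real"
  assumes meas: "\<And>k. 1 \<le> k \<Longrightarrow> X k \<in> borel_measurable M"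
    and indep: "indep_vars (\<lambda>_. borel) X {1..}"
    and ident: "\<And>k. 1 \<le> k \<Longrightarrow> distr M borel (X k) = distr M borel (X 1)"
    and bounded: "\<And>k \<omega>. 1 \<le> k \<Longrightarrow> \<omega> \<in> space M \<Longrightarrow> X k \<omega> \<in> {lo..hi}"
    and mean: "expectation (X 1) = 0"
  shows "AE \<omega> in M. (\<lambda>n. (\<Sum>k\<in>{1..n}. X k \<omega>) / real n) \<longlonglongrightarrow> 0"
proof -
  define A where "A m n = {\<omega>\<in>space M. 1 / real (Suc m) \<le> \<bar>(\<Sum>k\<in>{1..n}. X k \<omega>) / real n\<bar>}"
    for m n :: nat
  have A_sets: "A m n \<in> sets M" for m n
  proof -
    have [measurable]: "X k \<in> borel_measurable M" if "k \<in> {1..n}" for k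
      using meas that by simp
    show ?thesis unfolding A_def by measurable
  qed
  have "summable (\<lambda>n. measure M (A m n))" for m
    unfolding A_def by (rule bounded_iid_large_deviations_summable[OF meas indep ident bounded mean]) auto
  then have "AE \<omega> in M. eventually (\<lambda>n. \<omega> \<in> space M - A m n) sequentially" for m
    by (intro borel_cantelli_AE1) (auto simp: A_sets emeasure_eq_measure)
  then have "AE \<omega> in M. \<forall>m. eventually (\<lambda>n. \<omega> \<in> space M - A m n) sequentially"
    by (subst AE_all_countable) auto
  then show ?thesis
  proof (rule AE_mp[OF _ AE_I2], intro impI)
    fix \<omega> assume \<omega>: "\<omega> \<in> space M" and ev: "\<forall>m. eventually (\<lambda>n. \<omega> \<in> space M - A m n) sequentially"
    show "(\<lambda>n. (\<Sum>k\<in>{1..n}. X k \<omega>) / real n) \<longlonglongrightarrow> 0"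
    proof (rule LIMSEQ_I)
      fix e :: real assume "0 < e"
      then obtain m where m: "inverse (real (Suc m)) < e" using reals_Archimedean by blast
      have "eventually (\<lambda>n. norm ((\<Sum>k\<in>{1..n}. X k \<omega>) / real n - 0) < e) sequentially"
        using ev[rule_format, of m]
      proof eventually_elim
        case (elim n)
        then have "\<bar>(\<Sum>k\<in>{1..n}. X k \<omega>) / real n\<bar> < inverse (real (Suc m))"
          using \<omega> by (auto simp: A_def inverse_eq_divide)
        then show ?case using m by simp
      qed
      then show "\<exists>n0. \<forall>n\<ge>n0. norm ((\<Sum>k\<in>{1..n}. X k \<omega>) / real n - 0) < e"
        by (simp add: eventually_sequentially)
    qed
  qed
qed

lemma paired_variational_inequalities:
  fixes a b ca cb g h :: real
  assumes "0 \<le> (cb - ca) * (b - a)" "0 \<le> (b - a) * (ca + g)" "0 \<le> (a - b) * (cb + h)"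
  shows "0 \<le> (b - a) * (g - h)"
proof -
  have "(b - a) * (g - h) = (b - a) * (ca + g) + (a - b) * (cb + h) + (cb - ca) * (b - a)"
    by (simp add: algebra_simps)
  then show ?thesis using assms by linarith
qed

lemma sum_squares_le_zero_imp_zero:
  fixes d :: "nat \<Rightarrow> real"
  assumes "(\<Sum>j<N. d j * d j) \<le> 0"
  shows "\<forall>j<N. d j = 0"
proof -
  have "(\<Sum>j<N. d j * d j) = 0" using assms by (meson antisym sum_nonneg zero_le_square)
  then show ?thesis by (subst (asm) sum_nonneg_eq_0_iff) auto
qed

lemma regularized_intercept_system_unique:
  fixes x y :: "nat \<Rightarrow> real" and cp :: "nat \<Rightarrow> real \<Rightarrow> real"
  assumes t: "0 < t" and b: "0 < b" and e: "0 < \<epsilon>"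
    and uw: "u - w = t * (\<theta>1 - \<theta>2)"
    and mono: "\<forall>j<N. 0 \<le> (cp j (y j) - cp j (x j)) * (y j - x j)"
    and vx: "\<forall>j<N. 0 \<le> (y j - x j) * (cp j (x j) + (b * (\<Sum>l<N. x l) + (b + \<epsilon>) * x j - u))"
    and vy: "\<forall>j<N. 0 \<le> (x j - y j) * (cp j (y j) + (b * (\<Sum>l<N. y l) + (b + \<epsilon>) * y j - w))"
    and h1: "0 \<le> (\<theta>2 - \<theta>1) * (u - b * (\<Sum>l<N. x l) - p + \<epsilon> * \<theta>1)"
    and h2: "0 \<le> (\<theta>1 - \<theta>2) * (w - b * (\<Sum>l<N. y l) - p + \<epsilon> * \<theta>2)"
  shows "\<theta>1 = \<theta>2 \<and> (\<forall>j<N. x j = y j)"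
proof -
  define d where "d j = y j - x j" for j
  define S where "S = (\<Sum>j<N. d j)"
  define D2 where "D2 = (\<Sum>j<N. d j * d j)"
  define E where "E = \<theta>2 - \<theta>1"
  have w: "w = u + t * E" using uw by (simp add: E_def algebra_simps)
  have S_eq: "S = (\<Sum>l<N. y l) - (\<Sum>l<N. x l)" by (simp add: S_def d_def sum_subtractf)
  have "0 \<le> d j * (t * E) - b * S * d j - (b + \<epsilon>) * (d j * d j)" if "j < N" for j
    using paired_variational_inequalities[OF mono[rule_format, OF that] vx[rule_format, OF that]
        vy[rule_format, OF that]]
    by (simp add: w S_eq d_def algebra_simps)
  then have "0 \<le> (\<Sum>j<N. d j * (t * E) - b * S * d j - (b + \<epsilon>) * (d j * d j))"
    by (intro sum_nonneg) auto
  also have "\<dots> = t * E * S - b * S * S - (b + \<epsilon>) * D2"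
    by (simp add: S_def D2_def sum_subtractf sum_distrib_left sum_distrib_right mult_ac)
  finally have F1: "b * S * S + (b + \<epsilon>) * D2 \<le> t * E * S" by simp
  have "0 \<le> (\<theta>2 - \<theta>1) * (u - b * (\<Sum>l<N. x l) - p + \<epsilon> * \<theta>1) + (\<theta>1 - \<theta>2) * (w - b * (\<Sum>l<N. y l) - p + \<epsilon> * \<theta>2)"
    using h1 h2 by simp
  also have "\<dots> = b * E * S - (t + \<epsilon>) * (E * E)"
    by (simp add: w E_def S_eq algebra_simps)
  finally have F2: "(t + \<epsilon>) * (E * E) \<le> b * E * S" by simp
  \<comment> \<open>Combine \<open>b * F1 + t * F2\<close> with \<open>0 \<le> (b S - t E)\<^sup>2\<close>.\<close>
  have "b * (b * S * S + (b + \<epsilon>) * D2) \<le> b * (t * E * S)"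
    using F1 b by (intro mult_left_mono) auto
  moreover have "t * ((t + \<epsilon>) * (E * E)) \<le> t * (b * E * S)"
    using F2 t by (intro mult_left_mono) auto
  moreover have "0 \<le> (b * S - t * E) * (b * S - t * E)" by simp
  ultimately have key: "b * (b + \<epsilon>) * D2 + t * \<epsilon> * (E * E) \<le> 0"
    by (simp add: algebra_simps)
  have "0 \<le> D2" unfolding D2_def by (intro sum_nonneg) simp
  then have "0 \<le> b * (b + \<epsilon>) * D2" "0 \<le> t * \<epsilon> * (E * E)" using b e t by simp_all
  with key have "b * (b + \<epsilon>) * D2 = 0" "t * \<epsilon> * (E * E) = 0" by linarith+
  with b e t have "D2 \<le> 0" "E = 0" by simp_all
  then show ?thesis using sum_squares_le_zero_imp_zero[of d N] by (simp add: D2_def E_def d_def)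
qed

lemma regularized_slope_system_aggregate_mono:
  fixes x y :: "nat \<Rightarrow> real" and cp :: "nat \<Rightarrow> real \<Rightarrow> real"
  assumes w: "0 < w" and wu: "w \<le> u" and e: "0 < \<epsilon>"
    and xnn: "\<forall>j<N. 0 \<le> x j"
    and mono: "\<forall>j<N. 0 \<le> (cp j (y j) - cp j (x j)) * (y j - x j)"
    and vx: "\<forall>j<N. 0 \<le> (y j - x j) * (cp j (x j) + (u * (\<Sum>l<N. x l) + (u + \<epsilon>) * x j - a))"
    and vy: "\<forall>j<N. 0 \<le> (x j - y j) * (cp j (y j) + (w * (\<Sum>l<N. y l) + (w + \<epsilon>) * y j - a))"
  shows "w * (\<Sum>l<N. y l) \<le> u * (\<Sum>l<N. x l)"
proof (rule ccontr)
  define X where "X = (\<Sum>l<N. x l)"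
  define Y where "Y = (\<Sum>l<N. y l)"
  define D where "D = u * X - w * Y"
  define d where "d j = y j - x j" for j
  define P where "P = {j. j < N \<and> 0 < d j}"
  assume "\<not> ?thesis"
  then have D: "D < 0" by (simp add: D_def X_def Y_def)
  have "w * d j \<le> (if 0 < d j then D + (u - w) * x j else 0)" if j: "j < N" for j
  proof -
    have "0 \<le> d j * (D + (u - w) * x j - w * d j) - \<epsilon> * (d j * d j)"
      using paired_variational_inequalities[OF mono[rule_format, OF j] vx[rule_format, OF j]
          vy[rule_format, OF j]]
      by (simp add: D_def X_def Y_def d_def algebra_simps)
    moreover have "0 \<le> \<epsilon> * (d j * d j)" using e by simp
    ultimately have "0 \<le> d j * (D + (u - w) * x j - w * d j)" by linarith
    then show ?thesis
      using w by (cases "0 < d j") (auto simp: zero_le_mult_iff mult_nonneg_nonpos)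
  qed
  then have "(\<Sum>j<N. w * d j) \<le> (\<Sum>j<N. if 0 < d j then D + (u - w) * x j else 0)"
    by (intro sum_mono) simp
  moreover have "(\<Sum>j<N. w * d j) = w * (Y - X)"
    by (simp add: X_def Y_def d_def sum_subtractf sum_distrib_left right_diff_distrib)
  ultimately have "w * (Y - X) \<le> (\<Sum>j<N. if 0 < d j then D + (u - w) * x j else 0)"
    by simp
  also have "\<dots> = real (card P) * D + (u - w) * (\<Sum>j\<in>P. x j)"
    unfolding P_def by (simp add: sum.If_cases Int_def lessThan_def conj_commute sum.distrib sum_distrib_left)
  also have "\<dots> \<le> real (card P) * D + (u - w) * X"
    unfolding X_def P_def using xnn wu by (auto intro!: mult_left_mono sum_mono2)
  finally have "0 \<le> (real (card P) + 1) * D" by (simp add: D_def algebra_simps)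
  moreover have "(real (card P) + 1) * D < 0" using D by (simp add: mult_pos_neg)
  ultimately show False by linarith
qed

lemma regularized_slope_system_unique_parameter:
  fixes x y :: "nat \<Rightarrow> real" and cp :: "nat \<Rightarrow> real \<Rightarrow> real"
  assumes t: "0 < t" and u: "0 < u" and w: "0 < w" and e: "0 < \<epsilon>"
    and uw: "u - w = t * (\<theta>1 - \<theta>2)"
    and xnn: "\<forall>j<N. 0 \<le> x j" and ynn: "\<forall>j<N. 0 \<le> y j"
    and mono: "\<forall>j<N. 0 \<le> (cp j (y j) - cp j (x j)) * (y j - x j)"
    and vx: "\<forall>j<N. 0 \<le> (y j - x j) * (cp j (x j) + (u * (\<Sum>l<N. x l) + (u + \<epsilon>) * x j - a))"
    and vy: "\<forall>j<N. 0 \<le> (x j - y j) * (cp j (y j) + (w * (\<Sum>l<N. y l) + (w + \<epsilon>) * y j - a))"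
    and h1: "0 \<le> (\<theta>2 - \<theta>1) * (p - a + u * (\<Sum>l<N. x l) + \<epsilon> * \<theta>1)"
    and h2: "0 \<le> (\<theta>1 - \<theta>2) * (p - a + w * (\<Sum>l<N. y l) + \<epsilon> * \<theta>2)"
  shows "\<theta>1 = \<theta>2"
proof (rule ccontr)
  define R where "R = u * (\<Sum>l<N. x l) - w * (\<Sum>l<N. y l)"
  have R: "0 \<le> (\<theta>2 - \<theta>1) * (R + \<epsilon> * (\<theta>1 - \<theta>2))"
    using add_nonneg_nonneg[OF h1 h2] by (simp add: R_def algebra_simps)
  assume "\<theta>1 \<noteq> \<theta>2"
  then consider "\<theta>2 < \<theta>1" | "\<theta>1 < \<theta>2" by linarith
  then show False
  proof cases
    case 1
    have "0 < t * (\<theta>1 - \<theta>2)" using t 1 by simp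
    then have "w \<le> u" using uw by linarith
    then have "0 \<le> R"
      using regularized_slope_system_aggregate_mono[OF w _ e xnn mono vx vy] by (simp add: R_def)
    then have "0 < R + \<epsilon> * (\<theta>1 - \<theta>2)" using 1 e by (simp add: add_nonneg_pos)
    then have "(\<theta>2 - \<theta>1) * (R + \<epsilon> * (\<theta>1 - \<theta>2)) < 0" using 1 by (simp add: mult_neg_pos)
    then show False using R by linarith
  next
    case 2
    have "0 < t * (\<theta>2 - \<theta>1)" using t 2 by simp
    then have "u \<le> w" using uw by (simp add: algebra_simps)
    moreover have "\<forall>j<N. 0 \<le> (cp j (x j) - cp j (y j)) * (x j - y j)"
      using mono by (simp add: algebra_simps)
    ultimately have "R \<le> 0"
      using regularized_slope_system_aggregate_mono[OF u _ e ynn _ vy vx] by (simp add: R_def)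
    then have "R + \<epsilon> * (\<theta>1 - \<theta>2) < 0" using 2 e by (simp add: add_nonpos_neg mult_pos_neg)
    then have "(\<theta>2 - \<theta>1) * (R + \<epsilon> * (\<theta>1 - \<theta>2)) < 0" using 2 by (simp add: mult_pos_neg)
    then show False using R by linarith
  qed
qed

lemma regularized_slope_system_unique:
  fixes x y :: "nat \<Rightarrow> real" and cp :: "nat \<Rightarrow> real \<Rightarrow> real"
  assumes t: "0 < t" and u: "0 < u" and w: "0 < w" and e: "0 < \<epsilon>"
    and uw: "u - w = t * (\<theta>1 - \<theta>2)"
    and xnn: "\<forall>j<N. 0 \<le> x j" and ynn: "\<forall>j<N. 0 \<le> y j"
    and mono: "\<forall>j<N. 0 \<le> (cp j (y j) - cp j (x j)) * (y j - x j)"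
    and vx: "\<forall>j<N. 0 \<le> (y j - x j) * (cp j (x j) + (u * (\<Sum>l<N. x l) + (u + \<epsilon>) * x j - a))"
    and vy: "\<forall>j<N. 0 \<le> (x j - y j) * (cp j (y j) + (w * (\<Sum>l<N. y l) + (w + \<epsilon>) * y j - a))"
    and h1: "0 \<le> (\<theta>2 - \<theta>1) * (p - a + u * (\<Sum>l<N. x l) + \<epsilon> * \<theta>1)"
    and h2: "0 \<le> (\<theta>1 - \<theta>2) * (p - a + w * (\<Sum>l<N. y l) + \<epsilon> * \<theta>2)"
  shows "\<theta>1 = \<theta>2 \<and> (\<forall>j<N. x j = y j)"
proof -
  have \<theta>: "\<theta>1 = \<theta>2"
    by (rule regularized_slope_system_unique_parameter[OF t u w e uw xnn ynn mono vx vy h1 h2])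
  then have w_eq: "w = u" using uw by simp
  define d where "d j = y j - x j" for j
  define S where "S = (\<Sum>j<N. d j)"
  define D2 where "D2 = (\<Sum>j<N. d j * d j)"
  have S_eq: "S = (\<Sum>l<N. y l) - (\<Sum>l<N. x l)" by (simp add: S_def d_def sum_subtractf)
  have "0 \<le> - u * S * d j - (u + \<epsilon>) * (d j * d j)" if "j < N" for j
    using paired_variational_inequalities[OF mono[rule_format, OF that] vx[rule_format, OF that]
        vy[rule_format, OF that]]
    by (simp add: w_eq S_eq d_def algebra_simps)
  then have "0 \<le> (\<Sum>j<N. - u * S * d j - (u + \<epsilon>) * (d j * d j))"
    by (intro sum_nonneg) auto
  also have "\<dots> = - u * S * S - (u + \<epsilon>) * D2"
    by (simp add: S_def D2_def sum_subtractf sum_distrib_left sum_distrib_right sum_negf mult_ac)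
  finally have "(u + \<epsilon>) * D2 \<le> - u * (S * S)" by (simp add: algebra_simps)
  also have "\<dots> \<le> 0" using u by simp
  finally have "D2 \<le> 0" using u e by (simp add: mult_le_0_iff)
  with \<theta> show ?thesis using sum_squares_le_zero_imp_zero[of d N] by (simp add: D2_def d_def)
qed

lemma Fvi_strongly_monotone:
  fixes z xs :: "nat \<Rightarrow> real"
  assumes b: "0 < bstar" and zK: "\<forall>j<N. z j \<in> K j" and xs_K: "\<forall>j<N. xs j \<in> K j"
    and mono: "\<forall>j<N. \<forall>u\<in>K j. \<forall>v\<in>K j. 0 \<le> (c' j v - c' j u) * (v - u)"
  shows "bstar * (\<Sum>j<N. (z j - xs j) * (z j - xs j))
           \<le> (\<Sum>j<N. (z j - xs j) * (Fvi astar bstar c' N j z - Fvi astar bstar c' N j xs))"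
proof -
  define d where "d j = z j - xs j" for j
  define S where "S = (\<Sum>j<N. d j)"
  have "d j * (Fvi astar bstar c' N j z - Fvi astar bstar c' N j xs)
      = (c' j (z j) - c' j (xs j)) * (z j - xs j) + bstar * d j * S + bstar * (d j * d j)" for j
    unfolding Fvi_def d_def S_def by (simp add: sum_subtractf algebra_simps)
  then have "(\<Sum>j<N. d j * (Fvi astar bstar c' N j z - Fvi astar bstar c' N j xs))
      = (\<Sum>j<N. (c' j (z j) - c' j (xs j)) * (z j - xs j)) + bstar * S * S + bstar * (\<Sum>j<N. d j * d j)"
    by (simp add: sum.distrib sum_distrib_left sum_distrib_right S_def mult_ac)
  moreover have "0 \<le> (\<Sum>j<N. (c' j (z j) - c' j (xs j)) * (z j - xs j))"
    using mono zK xs_K by (intro sum_nonneg) auto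
  moreover have "0 \<le> bstar * S * S" using b by (simp add: mult.assoc)
  ultimately show ?thesis unfolding d_def by linarith
qed

lemma Fvi_variational_inequality_distance_bound:
  fixes z xs G :: "nat \<Rightarrow> real"
  assumes b: "0 < bstar"
    and zK: "\<forall>j<N. z j \<in> K j"
    and xs_K: "\<forall>j<N. xs j \<in> K j"
    and xs_VI: "\<forall>y. (\<forall>j<N. y j \<in> K j) \<longrightarrow> (\<Sum>j<N. (y j - xs j) * Fvi astar bstar c' N j xs) \<ge> 0"
    and z_VI: "\<forall>j<N. 0 \<le> (xs j - z j) * G j"
    and mono: "\<forall>j<N. \<forall>u\<in>K j. \<forall>v\<in>K j. 0 \<le> (c' j v - c' j u) * (v - u)"
  shows "bstar * (\<Sum>j<N. (z j - xs j) * (z j - xs j))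
           \<le> (\<Sum>j<N. (z j - xs j) * (Fvi astar bstar c' N j z - G j))"
proof -
  define d where "d j = z j - xs j" for j
  have "(\<Sum>j<N. d j * (Fvi astar bstar c' N j z - Fvi astar bstar c' N j xs))
      = (\<Sum>j<N. d j * (Fvi astar bstar c' N j z - G j) - d j * Fvi astar bstar c' N j xs - - d j * G j)"
    by (rule sum.cong) (simp_all add: algebra_simps)
  also have "\<dots> = (\<Sum>j<N. d j * (Fvi astar bstar c' N j z - G j)) - (\<Sum>j<N. d j * Fvi astar bstar c' N j xs)
        - (\<Sum>j<N. - d j * G j)"
    by (simp only: sum_subtractf)
  finally have split: "(\<Sum>j<N. d j * (Fvi astar bstar c' N j z - Fvi astar bstar c' N j xs))
      = (\<Sum>j<N. d j * (Fvi astar bstar c' N j z - G j)) - (\<Sum>j<N. d j * Fvi astar bstar c' N j xs)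
        - (\<Sum>j<N. - d j * G j)" .
  have "0 \<le> (\<Sum>j<N. d j * Fvi astar bstar c' N j xs)"
    using xs_VI[rule_format, of z] zK by (simp add: d_def)
  moreover have "0 \<le> (\<Sum>j<N. - d j * G j)"
    using z_VI unfolding d_def by (intro sum_nonneg) (simp add: algebra_simps)
  ultimately show ?thesis
    using Fvi_strongly_monotone[where astar=astar, OF b zK xs_K mono] split unfolding d_def by linarith
qed

lemma approximate_variational_inequality_solution_error_bound:
  fixes z xs G :: "nat \<Rightarrow> real"
  assumes b: "0 < bstar" and Bd: "\<forall>j<N. \<forall>v\<in>K j. \<bar>v\<bar> \<le> B"
    and zK: "\<forall>j<N. z j \<in> K j"
    and z_VI: "\<forall>j<N. 0 \<le> (xs j - z j) * G j"
    and err: "\<forall>j<N. \<bar>Fvi astar bstar c' N j z - G j\<bar> \<le> r"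
    and xs_K: "\<forall>j<N. xs j \<in> K j"
    and xs_VI: "\<forall>y. (\<forall>j<N. y j \<in> K j) \<longrightarrow> (\<Sum>j<N. (y j - xs j) * Fvi astar bstar c' N j xs) \<ge> 0"
    and mono: "\<forall>j<N. \<forall>u\<in>K j. \<forall>v\<in>K j. 0 \<le> (c' j v - c' j u) * (v - u)"
    and j: "j < N"
  shows "(z j - xs j)\<^sup>2 \<le> real N * (2 * B) * r / bstar"
proof -
  have "bstar * (\<Sum>j<N. (z j - xs j) * (z j - xs j))
      \<le> (\<Sum>j<N. (z j - xs j) * (Fvi astar bstar c' N j z - G j))"
    by (rule Fvi_variational_inequality_distance_bound[OF b zK xs_K xs_VI z_VI mono])
  also have "\<dots> \<le> (\<Sum>j<N. \<bar>z j - xs j\<bar> * \<bar>Fvi astar bstar c' N j z - G j\<bar>)"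
    by (intro sum_mono) (simp add: abs_mult[symmetric])
  also have "\<dots> \<le> (\<Sum>j<N. (2 * B) * r)"
  proof (intro sum_mono mult_mono)
    fix l assume "l \<in> {..<N}"
    then have "\<bar>z l\<bar> \<le> B" "\<bar>xs l\<bar> \<le> B" using Bd zK xs_K by auto
    then show "\<bar>z l - xs l\<bar> \<le> 2 * B" using abs_triangle_ineq4[of "z l" "xs l"] by linarith
    show "\<bar>Fvi astar bstar c' N l z - G l\<bar> \<le> r" using err \<open>l \<in> {..<N}\<close> by simp
    show "0 \<le> 2 * B" using Bd xs_K j by force
  qed simp
  finally have total: "bstar * (\<Sum>j<N. (z j - xs j) * (z j - xs j)) \<le> real N * (2 * B) * r"
    by simp
  have "(z j - xs j)\<^sup>2 \<le> (\<Sum>j<N. (z j - xs j) * (z j - xs j))"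
    unfolding power2_eq_square
    using j by (intro member_le_sum[of j "{..<N}" "\<lambda>j. (z j - xs j) * (z j - xs j)"]) auto
  then have "bstar * (z j - xs j)\<^sup>2 \<le> bstar * (\<Sum>j<N. (z j - xs j) * (z j - xs j))"
    using b by (intro mult_left_mono) auto
  then have "bstar * (z j - xs j)\<^sup>2 \<le> real N * (2 * B) * r" using total by (rule order_trans)
  then show ?thesis using b by (simp add: pos_le_divide_eq mult.commute)
qed

lemma approximate_variational_inequality_solutions_tendsto:
  fixes z :: "nat \<Rightarrow> nat \<Rightarrow> real" and G :: "nat \<Rightarrow> nat \<Rightarrow> real" and R :: "nat \<Rightarrow> real"
  assumes b: "0 < bstar" and Bd: "\<forall>j<N. \<forall>v\<in>K j. \<bar>v\<bar> \<le> B"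
    and zK: "\<forall>k. \<forall>j<N. z k j \<in> K j"
    and z_VI: "\<forall>k. \<forall>j<N. 0 \<le> (xs j - z k j) * G k j"
    and err: "\<forall>k. \<forall>j<N. \<bar>Fvi astar bstar c' N j (z k) - G k j\<bar> \<le> R k"
    and R: "R \<longlonglongrightarrow> 0"
    and xs_K: "\<forall>j<N. xs j \<in> K j"
    and xs_VI: "\<forall>y. (\<forall>j<N. y j \<in> K j) \<longrightarrow> (\<Sum>j<N. (y j - xs j) * Fvi astar bstar c' N j xs) \<ge> 0"
    and mono: "\<forall>j<N. \<forall>u\<in>K j. \<forall>v\<in>K j. 0 \<le> (c' j v - c' j u) * (v - u)"
    and j: "j < N"
  shows "(\<lambda>k. z k j) \<longlonglongrightarrow> xs j"
proof -
  have sq: "(\<lambda>k. (z k j - xs j)\<^sup>2) \<longlonglongrightarrow> 0"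
  proof (rule tendsto_sandwich[of "\<lambda>_. 0" _ _ "\<lambda>k. real N * (2 * B) * R k / bstar"])
    have "(z k j - xs j)\<^sup>2 \<le> real N * (2 * B) * R k / bstar" for k
      using zK z_VI err
      by (intro approximate_variational_inequality_solution_error_bound[OF b Bd _ _ _ xs_K xs_VI mono j])
        auto
    then show "eventually (\<lambda>k. (z k j - xs j)\<^sup>2 \<le> real N * (2 * B) * R k / bstar) sequentially"
      by simp
    have "(\<lambda>k. real N * (2 * B) * R k / bstar) \<longlonglongrightarrow> real N * (2 * B) * 0 / bstar"
      by (intro tendsto_intros R) (use b in simp)
    then show "(\<lambda>k. real N * (2 * B) * R k / bstar) \<longlonglongrightarrow> 0" by simp
  qed simp_all
  have "(\<lambda>k. sqrt ((z k j - xs j)\<^sup>2)) \<longlonglongrightarrow> sqrt 0"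
    by (intro tendsto_intros sq)
  then have "(\<lambda>k. \<bar>z k j - xs j\<bar>) \<longlonglongrightarrow> 0" by simp
  then show ?thesis by (simp add: tendsto_rabs_zero_iff LIM_zero_iff)
qed

lemma Fvi_minus_gradf_bound:
  fixes z :: "nat \<Rightarrow> real"
  assumes zB: "\<forall>j<N. \<bar>z j\<bar> \<le> B" and j: "j < N"
  shows "\<bar>Fvi astar bstar c' N j z - (gradf caseA astar bstar c' N j z \<theta> + e * z j)\<bar>
     \<le> \<bar>\<theta> - (if caseA then astar else bstar)\<bar> * (real N * B + B + 1) + \<bar>e\<bar> * B"
proof -
  have B: "0 \<le> B" using zB j by force
  have "\<bar>\<Sum>l<N. z l\<bar> \<le> (\<Sum>l<N. \<bar>z l\<bar>)" by (rule sum_abs)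
  also have "\<dots> \<le> (\<Sum>l<N. B)" using zB by (intro sum_mono) auto
  finally have ZB: "\<bar>(\<Sum>l<N. z l) + z j\<bar> \<le> real N * B + B" using zB j by fastforce
  have ez: "\<bar>e * z j\<bar> \<le> \<bar>e\<bar> * B" using zB j by (simp add: abs_mult mult_left_mono)
  show ?thesis
  proof (cases caseA)
    case True
    have eq: "Fvi astar bstar c' N j z - (gradf caseA astar bstar c' N j z \<theta> + e * z j) = (\<theta> - astar) - e * z j"
      using True by (simp add: Fvi_def gradf_def phat_def algebra_simps)
    have A: "\<bar>\<theta> - astar\<bar> \<le> \<bar>\<theta> - astar\<bar> * (real N * B + B + 1)"
      using B by (simp add: mult_le_cancel_left1)
    show ?thesis
      unfolding eq if_P[OF True] by (rule order_trans[OF abs_triangle_ineq4 add_mono[OF A ez]])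
  next
    case False
    have eq: "Fvi astar bstar c' N j z - (gradf caseA astar bstar c' N j z \<theta> + e * z j)
        = (bstar - \<theta>) * ((\<Sum>l<N. z l) + z j) - e * z j"
      using False by (simp add: Fvi_def gradf_def phat_def algebra_simps)
    have A: "\<bar>(bstar - \<theta>) * ((\<Sum>l<N. z l) + z j)\<bar> \<le> \<bar>\<theta> - bstar\<bar> * (real N * B + B + 1)"
      using ZB by (simp add: abs_mult abs_minus_commute mult_left_mono)
    show ?thesis
      unfolding eq if_not_P[OF False] by (rule order_trans[OF abs_triangle_ineq4 add_mono[OF A ez]])
  qed
qed

text \<open>Written as \<open>c' + affine part\<close>, the shape used by \<open>paired_variational_inequalities\<close>.\<close>

lemma regularized_gradf_intercept:
  "caseA \<Longrightarrow> gradf caseA a b c' N j z \<theta> + e * z j = c' j (z j) + (b * (\<Sum>l<N. z l) + (b + e) * z j - \<theta>)"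
  by (simp add: gradf_def phat_def algebra_simps)

lemma regularized_gradf_slope:
  "\<not> caseA \<Longrightarrow> gradf caseA a b c' N j z \<theta> + e * z j = c' j (z j) + (\<theta> * (\<Sum>l<N. z l) + (\<theta> + e) * z j - a)"
  by (simp add: gradf_def phat_def algebra_simps)

text \<open>One sample path of Algorithm II: \<open>\<theta>s\<close> is \<open>\<theta>\<^sup>*\<close> and \<open>\<xi> k\<close> the realised noise \<open>\<xi>\<^sup>k(\<omega>)\<close>.\<close>

locale algorithm_II_path =
  fixes N :: nat and K :: "nat \<Rightarrow> real set" and c c' :: "nat \<Rightarrow> real \<Rightarrow> real"
    and astar bstar \<delta> \<Delta> \<gamma>x \<gamma>\<theta> \<theta>s :: real and \<epsilon> :: "nat \<Rightarrow> real" and caseA :: bool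
    and \<xi> :: "nat \<Rightarrow> real" and x :: "nat \<Rightarrow> nat \<Rightarrow> nat \<Rightarrow> real"
    and \<theta> \<theta>hat vt vtbar :: "nat \<Rightarrow> nat \<Rightarrow> real" and p :: "nat \<Rightarrow> real"
  assumes \<theta>s: "\<theta>s = (if caseA then astar else bstar)"
    and bstar: "0 < bstar"
    and K: "\<forall>j<N. K j \<noteq> {} \<and> closed (K j) \<and> convex (K j) \<and> bounded (K j) \<and> K j \<subseteq> {0..}"
    and Kpos: "\<exists>j<N. \<forall>v\<in>K j. 0 < v"
    and c_conv: "\<forall>j<N. convex_on (K j) (c j)"
    and c_deriv: "\<forall>j<N. \<forall>v\<in>K j. (c j has_real_derivative c' j v) (at v)"
    and \<delta>: "0 < \<delta>"
    and A8: "\<forall>k\<ge>1. \<delta> < \<theta>s + \<xi> k \<and> \<theta>s + \<xi> k < \<Delta>"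
    and \<epsilon>_pos: "\<forall>k. 0 < \<epsilon> k" and \<epsilon>_lim: "\<epsilon> \<longlonglongrightarrow> 0"
    and \<gamma>: "0 < \<gamma>x" "0 < \<gamma>\<theta>"
    and vtbar0: "\<forall>i<N. vtbar i 0 = 0"
    and x_step: "\<forall>i<N. \<forall>k. \<forall>j<N.
       x i (Suc k) j = closest_point (K j)
         (x i (Suc k) j - \<gamma>x * (gradf caseA astar bstar c' N j (x i (Suc k)) (\<theta>hat i (Suc k))
                                   + \<epsilon> k * x i (Suc k) j))"
    and \<theta>_step: "\<forall>i<N. \<forall>k.
       \<theta> i (Suc k) = closest_point {\<delta>..\<Delta>}
         (\<theta> i (Suc k) - \<gamma>\<theta> *
            ((if caseA
              then phat caseA astar bstar (\<theta>hat i (Suc k)) (\<Sum>j<N. x i (Suc k) j) - p k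
              else p k - phat caseA astar bstar (\<theta>hat i (Suc k)) (\<Sum>j<N. x i (Suc k) j))
             + \<epsilon> k * \<theta> i (Suc k)))"
    and \<theta>hat_eq: "\<forall>i<N. \<forall>k.
       \<theta>hat i (Suc k) = \<theta> i (Suc k) / real (Suc k) + real k / real (Suc k) * vtbar i k"
    and p_step: "\<forall>k\<ge>1.
       p k = (if caseA then (astar + \<xi> k) - bstar * (\<Sum>j<N. x j k j)
                 else astar - (bstar + \<xi> k) * (\<Sum>j<N. x j k j))"
    and vt_eq: "\<forall>i<N. \<forall>k\<ge>1.
       vt i k = (if caseA then p k + bstar * (\<Sum>j<N. x i k j)
                     else (astar - p k) / (\<Sum>j<N. x i k j))"
    and vtbar_step: "\<forall>i<N. \<forall>k\<ge>1.
       vtbar i k = ((real k - 1) * vtbar i (k - 1) + vt i k) / real k"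
begin

definition price_gap :: "nat \<Rightarrow> nat \<Rightarrow> real" where
  "price_gap i k = (if caseA
     then phat caseA astar bstar (\<theta>hat i (Suc k)) (\<Sum>j<N. x i (Suc k) j) - p k
     else p k - phat caseA astar bstar (\<theta>hat i (Suc k)) (\<Sum>j<N. x i (Suc k) j))"

lemma price_gap_intercept:
  "caseA \<Longrightarrow> price_gap i k = \<theta>hat i (Suc k) - bstar * (\<Sum>j<N. x i (Suc k) j) - p k"
  unfolding price_gap_def phat_def by simp

lemma price_gap_slope:
  "\<not> caseA \<Longrightarrow> price_gap i k = p k - astar + \<theta>hat i (Suc k) * (\<Sum>j<N. x i (Suc k) j)"
  unfolding price_gap_def phat_def by simp

lemma estimate_VI:
  assumes i: "i < N" and j: "j < N"
  shows "x i (Suc k) j \<in> K j"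
    and "\<forall>z\<in>K j. 0 \<le> (z - x i (Suc k) j) *
           (gradf caseA astar bstar c' N j (x i (Suc k)) (\<theta>hat i (Suc k)) + \<epsilon> k * x i (Suc k) j)"
proof -
  have S: "closed (K j)" "convex (K j)" "K j \<noteq> {}" using K j by auto
  note VI = closest_point_fixpoint_imp_variational_inequality[OF S \<gamma>(1)]
  have "x i (Suc k) j = closest_point (K j) (x i (Suc k) j - \<gamma>x *\<^sub>R
          (gradf caseA astar bstar c' N j (x i (Suc k)) (\<theta>hat i (Suc k)) + \<epsilon> k * x i (Suc k) j))"
    using x_step i j by simp
  from VI[OF this] show "x i (Suc k) j \<in> K j"
    and "\<forall>z\<in>K j. 0 \<le> (z - x i (Suc k) j) *
           (gradf caseA astar bstar c' N j (x i (Suc k)) (\<theta>hat i (Suc k)) + \<epsilon> k * x i (Suc k) j)"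
    by simp_all
qed

lemma parameter_VI:
  assumes i: "i < N"
  shows "\<theta> i (Suc k) \<in> {\<delta>..\<Delta>}"
    and "\<forall>z\<in>{\<delta>..\<Delta>}. 0 \<le> (z - \<theta> i (Suc k)) * (price_gap i k + \<epsilon> k * \<theta> i (Suc k))"
proof -
  have "\<delta> \<le> \<Delta>" using A8 by (meson order.strict_trans less_imp_le order_refl)
  then have S: "closed {\<delta>..\<Delta>}" "convex {\<delta>..\<Delta>}" "{\<delta>..\<Delta>} \<noteq> {}" by auto
  have "\<theta> i (Suc k) = closest_point {\<delta>..\<Delta>} (\<theta> i (Suc k) - \<gamma>\<theta> *\<^sub>R (price_gap i k + \<epsilon> k * \<theta> i (Suc k)))"
    using \<theta>_step i by (simp add: price_gap_def)
  from closest_point_fixpoint_imp_variational_inequality[OF S \<gamma>(2) this]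
  show "\<theta> i (Suc k) \<in> {\<delta>..\<Delta>}"
    and "\<forall>z\<in>{\<delta>..\<Delta>}. 0 \<le> (z - \<theta> i (Suc k)) * (price_gap i k + \<epsilon> k * \<theta> i (Suc k))"
    by simp_all
qed

lemma cost_derivative_monotone: "\<forall>j<N. \<forall>u\<in>K j. \<forall>v\<in>K j. 0 \<le> (c' j v - c' j u) * (v - u)"
  using convex_on_derivative_monotone c_conv c_deriv by blast

lemma estimate_nonneg: "i < N \<Longrightarrow> j < N \<Longrightarrow> 0 \<le> x i (Suc k) j"
  using estimate_VI(1) K by blast

lemma estimated_aggregate_pos:
  assumes i: "i < N"
  shows "0 < (\<Sum>j<N. x i (Suc k) j)"
proof -
  obtain j0 where j0: "j0 < N" "\<forall>v\<in>K j0. 0 < v" using Kpos by blast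
  have "x i (Suc k) j0 \<le> (\<Sum>j<N. x i (Suc k) j)"
    using j0 estimate_nonneg[OF i] by (intro member_le_sum) auto
  moreover have "0 < x i (Suc k) j0" using j0 estimate_VI(1)[OF i j0(1)] by blast
  ultimately show ?thesis by linarith
qed

lemma \<theta>hat_pos:
  assumes "i < N" "0 \<le> vtbar i k"
  shows "0 < \<theta>hat i (Suc k)"
proof -
  have "0 < \<theta> i (Suc k) / real (Suc k)" using parameter_VI(1)[OF assms(1), of k] \<delta> by auto
  moreover have "0 \<le> real k / real (Suc k) * vtbar i k" using assms(2) by simp
  ultimately show ?thesis using \<theta>hat_eq assms(1) by simp
qed

text \<open>Firm \<open>i\<close>'s step-\<open>(k+1)\<close> system depends on \<open>i\<close> only through \<open>vtbar i k\<close>.\<close>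

lemma estimates_agree:
  assumes i: "i < N" and i': "i' < N" and eq: "vtbar i k = vtbar i' k" and nonneg: "0 \<le> vtbar i k"
  shows "\<theta> i (Suc k) = \<theta> i' (Suc k) \<and> (\<forall>j<N. x i (Suc k) j = x i' (Suc k) j)"
proof -
  define t where "t = 1 / real (Suc k)"
  have t: "0 < t" by (simp add: t_def)
  have uw: "\<theta>hat i (Suc k) - \<theta>hat i' (Suc k) = t * (\<theta> i (Suc k) - \<theta> i' (Suc k))"
    using \<theta>hat_eq i i' eq by (simp add: t_def diff_divide_distrib)
  have mono: "\<forall>j<N. 0 \<le> (c' j (x i' (Suc k) j) - c' j (x i (Suc k) j)) * (x i' (Suc k) j - x i (Suc k) j)"
    using cost_derivative_monotone estimate_VI(1)[OF i] estimate_VI(1)[OF i'] by simp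
  have V1: "\<forall>j<N. 0 \<le> (x i' (Suc k) j - x i (Suc k) j) *
      (gradf caseA astar bstar c' N j (x i (Suc k)) (\<theta>hat i (Suc k)) + \<epsilon> k * x i (Suc k) j)"
    using estimate_VI(2)[OF i] estimate_VI(1)[OF i'] by simp
  have V2: "\<forall>j<N. 0 \<le> (x i (Suc k) j - x i' (Suc k) j) *
      (gradf caseA astar bstar c' N j (x i' (Suc k)) (\<theta>hat i' (Suc k)) + \<epsilon> k * x i' (Suc k) j)"
    using estimate_VI(2)[OF i'] estimate_VI(1)[OF i] by simp
  have T1: "0 \<le> (\<theta> i' (Suc k) - \<theta> i (Suc k)) * (price_gap i k + \<epsilon> k * \<theta> i (Suc k))"
    using parameter_VI(2)[OF i, of k] parameter_VI(1)[OF i', of k] by (rule bspec)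
  have T2: "0 \<le> (\<theta> i (Suc k) - \<theta> i' (Suc k)) * (price_gap i' k + \<epsilon> k * \<theta> i' (Suc k))"
    using parameter_VI(2)[OF i', of k] parameter_VI(1)[OF i, of k] by (rule bspec)
  show ?thesis
  proof (cases caseA)
    case True
    show ?thesis
      by (rule regularized_intercept_system_unique[where x="x i (Suc k)" and y="x i' (Suc k)" and cp=c',
            OF t bstar \<epsilon>_pos[rule_format] uw mono
            V1[unfolded regularized_gradf_intercept[OF True]] V2[unfolded regularized_gradf_intercept[OF True]]
            T1[unfolded price_gap_intercept[OF True]] T2[unfolded price_gap_intercept[OF True]]])
  next
    case False
    show ?thesis
      by (rule regularized_slope_system_unique[where x="x i (Suc k)" and y="x i' (Suc k)" and cp=c',
            OF t \<theta>hat_pos[OF i nonneg] \<theta>hat_pos[OF i' nonneg[unfolded eq]]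
            \<epsilon>_pos[rule_format] uw _ _ mono
            V1[unfolded regularized_gradf_slope[OF False]] V2[unfolded regularized_gradf_slope[OF False]]
            T1[unfolded price_gap_slope[OF False]] T2[unfolded price_gap_slope[OF False]]])
        (use estimate_nonneg i i' in auto)
  qed
qed

text \<open>When all estimates agree, the realised aggregate is every firm's estimated aggregate.\<close>

lemma observed_parameter:
  assumes agree: "\<forall>i<N. vtbar i k = vtbar 0 k \<and> 0 \<le> vtbar i k" and i: "i < N"
  shows "vt i (Suc k) = \<theta>s + \<xi> (Suc k)"
proof -
  have N: "0 < N" using i by simp
  have same: "x l (Suc k) j = x 0 (Suc k) j" if "l < N" "j < N" for l j
  proof -
    have "vtbar l k = vtbar 0 k" "0 \<le> vtbar l k" using agree that(1) by blast+
    then show ?thesis using estimates_agree[OF that(1) N] that(2) by blast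
  qed
  have X: "(\<Sum>j<N. x j (Suc k) j) = (\<Sum>j<N. x i (Suc k) j)"
  proof (rule sum.cong)
    fix j assume "j \<in> {..<N}"
    then show "x j (Suc k) j = x i (Suc k) j" using same[of j j] same[of i j] i by simp
  qed simp
  show ?thesis
  proof (cases caseA)
    case True
    then show ?thesis using vt_eq p_step i X \<theta>s by simp
  next
    case False
    then have "vt i (Suc k) = ((bstar + \<xi> (Suc k)) * (\<Sum>j<N. x i (Suc k) j)) / (\<Sum>j<N. x i (Suc k) j)"
      using vt_eq p_step i X by simp
    then show ?thesis using estimated_aggregate_pos[OF i, of k] \<theta>s False by simp
  qed
qed

lemma consensus: "\<forall>i<N. vtbar i k = vtbar 0 k \<and> 0 \<le> vtbar i k"
proof (induction k)
  case 0
  then show ?case using vtbar0 by simp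
next
  case (Suc k)
  have "\<delta> < \<theta>s + \<xi> (Suc k)" using A8 by simp
  then have pos: "0 < \<theta>s + \<xi> (Suc k)" using \<delta> by linarith
  have step: "vtbar i (Suc k) = (real k * vtbar i k + (\<theta>s + \<xi> (Suc k))) / real (Suc k)"
    if "i < N" for i
    using vtbar_step observed_parameter[OF Suc.IH that] that by simp
  show ?case
  proof (intro allI impI conjI)
    fix i assume i: "i < N"
    then have IH: "vtbar i k = vtbar 0 k" "0 \<le> vtbar i k" using Suc.IH by blast+
    have N: "0 < N" using i by simp
    show "vtbar i (Suc k) = vtbar 0 (Suc k)" by (simp only: step[OF i] step[OF N] IH)
    show "0 \<le> vtbar i (Suc k)" using step[OF i] IH(2) pos by simp
  qed
qed

lemma observed_parameter_eq: "i < N \<Longrightarrow> vt i (Suc k) = \<theta>s + \<xi> (Suc k)"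
  using observed_parameter[OF consensus] .

lemma vtbar_sample_mean: "i < N \<Longrightarrow> real k * vtbar i k = (\<Sum>m\<in>{1..k}. \<theta>s + \<xi> m)"
proof (induction k)
  case (Suc k)
  have "real (Suc k) * vtbar i (Suc k) = real k * vtbar i k + vt i (Suc k)"
    using vtbar_step Suc.prems by simp
  then show ?case using Suc observed_parameter_eq by simp
qed simp

lemma \<theta>hat_tendsto:
  assumes average: "(\<lambda>n. (\<Sum>k\<in>{1..n}. \<xi> k) / real n) \<longlonglongrightarrow> 0" and i: "i < N"
  shows "(\<lambda>k. \<theta>hat i k) \<longlonglongrightarrow> \<theta>s"
proof -
  have "eventually (\<lambda>k. \<theta>s + (\<Sum>m\<in>{1..k}. \<xi> m) / real k = vtbar i k) sequentially"
    unfolding eventually_sequentially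
  proof (intro exI allI impI)
    fix k :: nat assume "1 \<le> k"
    then show "\<theta>s + (\<Sum>m\<in>{1..k}. \<xi> m) / real k = vtbar i k"
      using vtbar_sample_mean[OF i, of k] by (simp add: sum.distrib field_simps)
  qed
  moreover have "(\<lambda>k. \<theta>s + (\<Sum>m\<in>{1..k}. \<xi> m) / real k) \<longlonglongrightarrow> \<theta>s + 0"
    by (intro tendsto_intros average)
  ultimately have vtbar: "(\<lambda>k. vtbar i k) \<longlonglongrightarrow> \<theta>s" using tendsto_cong by force
  have "(\<lambda>k. \<theta> i (Suc k) / real (Suc k)) \<longlonglongrightarrow> 0"
  proof (rule tendsto_sandwich[of "\<lambda>k. \<delta> / real (Suc k)" _ _ "\<lambda>k. \<Delta> / real (Suc k)"])
    show "eventually (\<lambda>k. \<delta> / real (Suc k) \<le> \<theta> i (Suc k) / real (Suc k)) sequentially"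
      "eventually (\<lambda>k. \<theta> i (Suc k) / real (Suc k) \<le> \<Delta> / real (Suc k)) sequentially"
      using parameter_VI(1)[OF i] by (simp_all add: divide_right_mono)
  qed (rule LIMSEQ_Suc[OF lim_const_over_n])+
  moreover have "(\<lambda>k. real k / real (Suc k) * vtbar i k) \<longlonglongrightarrow> 1 * \<theta>s"
    by (intro tendsto_mult LIMSEQ_n_over_Suc_n vtbar)
  ultimately have "(\<lambda>k. \<theta> i (Suc k) / real (Suc k) + real k / real (Suc k) * vtbar i k) \<longlonglongrightarrow> 0 + 1 * \<theta>s"
    by (rule tendsto_add)
  then have "(\<lambda>k. \<theta>hat i (Suc k)) \<longlonglongrightarrow> \<theta>s" using \<theta>hat_eq i by simp
  then show ?thesis by (rule LIMSEQ_imp_Suc)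
qed

lemma estimates_tendsto:
  fixes xs :: "nat \<Rightarrow> real"
  assumes average: "(\<lambda>n. (\<Sum>k\<in>{1..n}. \<xi> k) / real n) \<longlonglongrightarrow> 0"
    and xs_K: "\<forall>j<N. xs j \<in> K j"
    and xs_VI: "\<forall>y. (\<forall>j<N. y j \<in> K j) \<longrightarrow> (\<Sum>j<N. (y j - xs j) * Fvi astar bstar c' N j xs) \<ge> 0"
    and i: "i < N" and j: "j < N"
  shows "(\<lambda>k. x i k j) \<longlonglongrightarrow> xs j"
proof -
  obtain B where B: "\<forall>j<N. \<forall>v\<in>K j. \<bar>v\<bar> \<le> B"
  proof -
    have "bounded (\<Union>j<N. K j)" using K by (intro bounded_UN) auto
    then obtain B where "\<forall>v\<in>(\<Union>j<N. K j). \<bar>v\<bar> \<le> B" by (auto simp: bounded_iff)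
    then show thesis by (intro that[of B]) auto
  qed
  define R where "R k = \<bar>\<theta>hat i (Suc k) - \<theta>s\<bar> * (real N * B + B + 1) + \<bar>\<epsilon> k\<bar> * B" for k
  have "R \<longlonglongrightarrow> \<bar>\<theta>s - \<theta>s\<bar> * (real N * B + B + 1) + \<bar>0\<bar> * B"
    unfolding R_def
    by (intro tendsto_intros \<epsilon>_lim LIMSEQ_Suc[OF \<theta>hat_tendsto[OF average i]])
  then have R: "R \<longlonglongrightarrow> 0" by simp
  have err: "\<bar>Fvi astar bstar c' N l (x i (Suc k)) -
      (gradf caseA astar bstar c' N l (x i (Suc k)) (\<theta>hat i (Suc k)) + \<epsilon> k * x i (Suc k) l)\<bar> \<le> R k"
    if "l < N" for k l
    using Fvi_minus_gradf_bound[of N "x i (Suc k)" B l] B estimate_VI(1)[OF i] that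
    by (simp add: R_def \<theta>s)
  have "(\<lambda>k. x i (Suc k) j) \<longlonglongrightarrow> xs j"
  proof (rule approximate_variational_inequality_solutions_tendsto[OF bstar B _ _ _ R xs_K xs_VI
        cost_derivative_monotone j])
    show "\<forall>k. \<forall>j<N. x i (Suc k) j \<in> K j" using estimate_VI(1)[OF i] by blast
    show "\<forall>k. \<forall>j<N. 0 \<le> (xs j - x i (Suc k) j) *
        (gradf caseA astar bstar c' N j (x i (Suc k)) (\<theta>hat i (Suc k)) + \<epsilon> k * x i (Suc k) j)"
      using estimate_VI(2)[OF i] xs_K by blast
  qed (use err in blast)
  then show ?thesis by (rule LIMSEQ_imp_Suc)
qed

end

theorem theorem3:
  fixes M :: "'a measure" and N :: nat
    and K :: "nat \<Rightarrow> real set" and c c' :: "nat \<Rightarrow> real \<Rightarrow> real"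
    and astar bstar \<delta> \<Delta> \<gamma>x \<gamma>\<theta> :: real and \<epsilon> :: "nat \<Rightarrow> real" and caseA :: bool
    and \<xi> :: "nat \<Rightarrow> 'a \<Rightarrow> real"
    and x :: "'a \<Rightarrow> nat \<Rightarrow> nat \<Rightarrow> nat \<Rightarrow> real"
    and \<theta> \<theta>hat vt vtbar :: "'a \<Rightarrow> nat \<Rightarrow> nat \<Rightarrow> real"
    and p :: "'a \<Rightarrow> nat \<Rightarrow> real"
    and xs :: "nat \<Rightarrow> real"
  defines "\<theta>star \<equiv> (if caseA then astar else bstar)"
  assumes M: "prob_space M"
    and ab: "0 < astar" "0 < bstar"
    and \<xi>_meas: "\<forall>k\<ge>1. \<xi> k \<in> borel_measurable M"
    and \<xi>_indep: "prob_space.indep_vars M (\<lambda>_. borel) \<xi> {1..}"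
    and \<xi>_ident: "\<forall>k\<ge>1. distr M borel (\<xi> k) = distr M borel (\<xi> 1)"
    and \<xi>_int: "integrable M (\<xi> 1)"
    and \<xi>_mean: "(\<integral>\<omega>. \<xi> 1 \<omega> \<partial>M) = 0"
    \<comment> \<open>(A7)\<close>
    and K: "\<forall>j<N. K j \<noteq> {} \<and> closed (K j) \<and> convex (K j) \<and> bounded (K j) \<and> K j \<subseteq> {0..}"
    and Kpos: "\<exists>j<N. \<forall>v\<in>K j. 0 < v"
    and c_conv: "\<forall>j<N. convex_on (K j) (c j)"
    and c_deriv: "\<forall>j<N. \<forall>v\<in>K j. (c j has_real_derivative c' j v) (at v)"
    and c'_cont: "\<forall>j<N. continuous_on (K j) (c' j)"
    and c'_lip: "\<forall>j<N. \<exists>L. \<forall>u\<in>K j. \<forall>v\<in>K j. \<bar>c' j u - c' j v\<bar> \<le> L * \<bar>u - v\<bar>"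
    \<comment> \<open>(A8)\<close>
    and \<delta>: "0 < \<delta>"
    and A8: "\<forall>k\<ge>1. \<forall>\<omega>\<in>space M. \<delta> < \<theta>star + \<xi> k \<omega> \<and> \<theta>star + \<xi> k \<omega> < \<Delta>"
    and \<epsilon>_pos: "\<forall>k. 0 < \<epsilon> k" and \<epsilon>_dec: "decseq \<epsilon>" and \<epsilon>_lim: "\<epsilon> \<longlonglongrightarrow> 0"
    and \<gamma>: "0 < \<gamma>x" "0 < \<gamma>\<theta>"
    \<comment> \<open>Algorithm II: x omega i k = x_i^k (estimate of all outputs by firm i)\<close>
    and p0: "\<forall>\<omega>\<in>space M. p \<omega> 0 = astar - bstar * (\<Sum>j<N. x \<omega> j 0 j)"
    and vtbar0: "\<forall>\<omega>\<in>space M. \<forall>i<N. vtbar \<omega> i 0 = 0"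
    and x_step: "\<forall>\<omega>\<in>space M. \<forall>i<N. \<forall>k. \<forall>j<N.
       x \<omega> i (Suc k) j = closest_point (K j)
         (x \<omega> i (Suc k) j - \<gamma>x * (gradf caseA astar bstar c' N j (x \<omega> i (Suc k)) (\<theta>hat \<omega> i (Suc k))
                                   + \<epsilon> k * x \<omega> i (Suc k) j))"
    and \<theta>_step: "\<forall>\<omega>\<in>space M. \<forall>i<N. \<forall>k.
       \<theta> \<omega> i (Suc k) = closest_point {\<delta>..\<Delta>}
         (\<theta> \<omega> i (Suc k) - \<gamma>\<theta> *
            ((if caseA
              then phat caseA astar bstar (\<theta>hat \<omega> i (Suc k)) (\<Sum>j<N. x \<omega> i (Suc k) j) - p \<omega> k
              else p \<omega> k - phat caseA astar bstar (\<theta>hat \<omega> i (Suc k)) (\<Sum>j<N. x \<omega> i (Suc k) j))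
             + \<epsilon> k * \<theta> \<omega> i (Suc k)))"
    and \<theta>hat_def: "\<forall>\<omega>\<in>space M. \<forall>i<N. \<forall>k.
       \<theta>hat \<omega> i (Suc k) = \<theta> \<omega> i (Suc k) / real (Suc k) + real k / real (Suc k) * vtbar \<omega> i k"
    and p_step: "\<forall>\<omega>\<in>space M. \<forall>k\<ge>1.
       p \<omega> k = (if caseA then (astar + \<xi> k \<omega>) - bstar * (\<Sum>j<N. x \<omega> j k j)
                 else astar - (bstar + \<xi> k \<omega>) * (\<Sum>j<N. x \<omega> j k j))"
    and vt_def: "\<forall>\<omega>\<in>space M. \<forall>i<N. \<forall>k\<ge>1.
       vt \<omega> i k = (if caseA then p \<omega> k + bstar * (\<Sum>j<N. x \<omega> i k j)
                     else (astar - p \<omega> k) / (\<Sum>j<N. x \<omega> i k j))"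
    and vtbar_step: "\<forall>\<omega>\<in>space M. \<forall>i<N. \<forall>k\<ge>1.
       vtbar \<omega> i k = ((real k - 1) * vtbar \<omega> i (k - 1) + vt \<omega> i k) / real k"
    and xs_K: "\<forall>j<N. xs j \<in> K j"
    and xs_VI: "\<forall>y. (\<forall>j<N. y j \<in> K j) \<longrightarrow> (\<Sum>j<N. (y j - xs j) * Fvi astar bstar c' N j xs) \<ge> 0"
  shows "\<forall>i<N. (AE \<omega> in M. (\<lambda>k. \<theta>hat \<omega> i k) \<longlonglongrightarrow> \<theta>star)
              \<and> (AE \<omega> in M. \<forall>j<N. (\<lambda>k. x \<omega> i k j) \<longlonglongrightarrow> xs j)"
proof -
  interpret prob_space M by (rule M)
  have \<theta>star: "\<theta>star = (if caseA then astar else bstar)" by (simp add: \<theta>star_def)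
  have average: "AE \<omega> in M. (\<lambda>n. (\<Sum>k\<in>{1..n}. \<xi> k \<omega>) / real n) \<longlonglongrightarrow> 0"
  proof (rule bounded_iid_average_tendsto_zero[OF _ \<xi>_indep])
    show "\<xi> k \<in> borel_measurable M" if "1 \<le> k" for k using \<xi>_meas that by blast
    show "distr M borel (\<xi> k) = distr M borel (\<xi> 1)" if "1 \<le> k" for k using \<xi>_ident that by blast
    show "\<xi> k \<omega> \<in> {\<delta> - \<theta>star..\<Delta> - \<theta>star}" if "1 \<le> k" "\<omega> \<in> space M" for k \<omega>
      using A8 that by fastforce
    show "expectation (\<xi> 1) = 0" using \<xi>_mean by simp
  qed
  have path: "algorithm_II_path N K c c' astar bstar \<delta> \<Delta> \<gamma>x \<gamma>\<theta> \<theta>star \<epsilon> caseA (\<lambda>k. \<xi> k \<omega>)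
      (x \<omega>) (\<theta> \<omega>) (\<theta>hat \<omega>) (vt \<omega>) (vtbar \<omega>) (p \<omega>)" if \<omega>: "\<omega> \<in> space M" for \<omega>
    using \<omega> A8 by (intro algorithm_II_path.intro[OF \<theta>star ab(2) K Kpos c_conv c_deriv \<delta> _ \<epsilon>_pos
        \<epsilon>_lim \<gamma> bspec[OF vtbar0 \<omega>] bspec[OF x_step \<omega>] bspec[OF \<theta>_step \<omega>] bspec[OF \<theta>hat_def \<omega>]
        bspec[OF p_step \<omega>] bspec[OF vt_def \<omega>] bspec[OF vtbar_step \<omega>]]) auto
  have "AE \<omega> in M. \<forall>i<N. (\<lambda>k. \<theta>hat \<omega> i k) \<longlonglongrightarrow> \<theta>star \<and> (\<forall>j<N. (\<lambda>k. x \<omega> i k j) \<longlonglongrightarrow> xs j)"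
  proof (rule AE_mp[OF average AE_I2], intro impI allI conjI)
    fix \<omega> i j assume \<omega>: "\<omega> \<in> space M" and avg: "(\<lambda>n. (\<Sum>k\<in>{1..n}. \<xi> k \<omega>) / real n) \<longlonglongrightarrow> 0"
    show "(\<lambda>k. \<theta>hat \<omega> i k) \<longlonglongrightarrow> \<theta>star" if "i < N"
      using algorithm_II_path.\<theta>hat_tendsto[OF path[OF \<omega>] avg that] .
    show "(\<lambda>k. x \<omega> i k j) \<longlonglongrightarrow> xs j" if "i < N" "j < N"
      using algorithm_II_path.estimates_tendsto[OF path[OF \<omega>] avg xs_K xs_VI that] .
  qed
  then show ?thesis by (auto elim: eventually_mono)
qed

end
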